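(* Let $k\ge0$ be an integer. For $j\in\{1,2\}$ let $(\pi_j^{\mathrm{pre}},q_j^{\mathrm{pre}})$ and $(\pi_j^{\mathrm{post}},q_j^{\mathrm{post}})$ be pre- and post-branch (policy, dynamics) pairs, and let $\eta_j=\eta_k(\pi_j^{\mathrm{pre}},q_j^{\mathrm{pre}};\pi_j^{\mathrm{post}},q_j^{\mathrm{post}})$. For $t\ge0$ and $0\le i\le t$ let $\nu_{t,i}$ be the law of $s_i$ in the branched construction for time $t$ using the pairs of index $j=1$. Suppose that for all $t\ge0$: (i) for all $0\le i<m_t$: $\mathbb E_{s\sim\nu_{t,i},\,a\sim\pi_1^{\mathrm{pre}}(\cdot\mid s)}\big[D_{TV}(q_1^{\mathrm{pre}}(\cdot\mid s,a),q_2^{\mathrm{pre}}(\cdot\mid s,a))\big]\le\epsilon_m^{\mathrm{pre}}$; (ii) for all $m_t\le i<t$: $\mathbb E_{s\sim\nu_{t,i},\,a\sim\pi_1^{\mathrm{post}}(\cdot\mid s)}\big[D_{TV}(q_1^{\mathrm{post}}(\cdot\mid s,a),q_2^{\mathrm{post}}(\cdot\mid s,a))\big]\le\epsilon_m^{\mathrm{post}}$; and that $\sup_s D_{TV}(\pi_1^{\mathrm{pre}}(\cdot\mid s),\pi_2^{\mathrm{pre}}(\cdot\mid s))\le\epsilon_\pi^{\mathrm{pre}}$ and $\sup_s D_{TV}(\pi_1^{\mathrm{post}}(\cdot\mid s),\pi_2^{\mathrm{post}}(\cdot\mid s))\le\epsilon_\pi^{\mathrm{post}}$. Then $$|\eta_1-\eta_2|\le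 2r_{\max}\left[\frac{\gamma^{k+1}}{(1-\gamma)^2}(\epsilon_m^{\mathrm{pre}}+\epsilon_\pi^{\mathrm{pre}})+\frac{k}{1-\gamma}(\epsilon_m^{\mathrm{post}}+\epsilon_\pi^{\mathrm{post}})+\frac{\gamma^k}{1-\gamma}\epsilon_\pi^{\mathrm{pre}}+\frac{1}{1-\gamma}\epsilon_\pi^{\mathrm{post}}\right].$$
   Context: Let $\mathcal S$ and $\mathcal A$ be countable (e.g. finite) state and action spaces, $\rho_0$ a probability distribution on $\mathcal S$ (initial state distribution), $\gamma\in(0,1)$ a discount factor, and $r:\mathcal S\times\mathcal A\to\mathbb R$ a reward function with $|r(s,a)|\le r_{\max}$ for all $(s,a)$. A policy is a Markov kernel $\pi(a\mid s)$ from $\mathcal S$ to $\mathcal A$; a dynamics kernel is a Markov kernel $q(s'\mid s,a)$ from $\mathcal S\times\mathcal A$ to $\mathcal S$. For probability distributions $\mu,\nu$ on a countable set, $D_{TV}(\mu,\nu)=\frac12\sum_x|\mu(x)-\nu(x)|$. Branched return: given a "pre-branch" pair (policy $\pi^{\mathrm{pre}}$, dynamics $q^{\mathrm{pre}}$), a "post-branch" pair (policy $\pi^{\mathrm{post}}$, dynamics $q^{\mathrm{post}}$) and an integer $k\ge0$, for each $t\ge0$ let $m_t=\max(t-k,0)$ and generate $s_0\sim\rho_0$; for $0\le i<m_t$: $a_i\sim\pi^{\mathrm{pre}}(\cdot\mid s_i)$, $s_{i+1}\sim q^{\mathrm{pre}}(\cdot\mid s_i,a_i)$; for $m_t\le i<t$: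 $a_i\sim\pi^{\mathrm{post}}(\cdot\mid s_i)$, $s_{i+1}\sim q^{\mathrm{post}}(\cdot\mid s_i,a_i)$; finally $a_t\sim\pi^{\mathrm{post}}(\cdot\mid s_t)$. Let $d_t$ be the law of $(s_t,a_t)$ so produced. The $k$-branched return is $\eta_k(\pi^{\mathrm{pre}},q^{\mathrm{pre}};\pi^{\mathrm{post}},q^{\mathrm{post}})=\sum_{t\ge0}\gamma^t\,\mathbb E_{(s,a)\sim d_t}[r(s,a)]$. (Thus the state at time $t$ is obtained by following the pre-branch pair up to time $t-k$ and then the post-branch pair for the remaining at most $k$ steps.) *)

theory Defs
  imports "HOL-Probability.Probability"
begin

definition tv_dist :: "'x pmf \<Rightarrow> 'x pmf \<Rightarrow> real" where
  "tv_dist \<mu> \<nu> = (1/2) * (\<Sum>\<^sub>\<infinity>x. \<bar>pmf \<mu> x - pmf \<nu> x\<bar>)"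

definition step_pmf :: "('s \<Rightarrow> 'a pmf) \<Rightarrow> ('s \<Rightarrow> 'a \<Rightarrow> 's pmf) \<Rightarrow> 's pmf \<Rightarrow> 's pmf" where
  "step_pmf \<pi> q \<mu> = bind_pmf \<mu> (\<lambda>s. bind_pmf (\<pi> s) (\<lambda>a. q s a))"

definition branch_m :: "nat \<Rightarrow> nat \<Rightarrow> nat" where
  "branch_m k t = max (t - k) 0"

fun branch_state ::
  "'s pmf \<Rightarrow> ('s \<Rightarrow> 'a pmf) \<Rightarrow> ('s \<Rightarrow> 'a \<Rightarrow> 's pmf) \<Rightarrow> ('s \<Rightarrow> 'a pmf) \<Rightarrow> ('s \<Rightarrow> 'a \<Rightarrow> 's pmf)
   \<Rightarrow> nat \<Rightarrow> nat \<Rightarrow> nat \<Rightarrow> 's pmf" where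
  "branch_state \<rho>0 \<pi>pre qpre \<pi>post qpost k t 0 = \<rho>0"
| "branch_state \<rho>0 \<pi>pre qpre \<pi>post qpost k t (Suc i) =
     (if i < branch_m k t
      then step_pmf \<pi>pre qpre (branch_state \<rho>0 \<pi>pre qpre \<pi>post qpost k t i)
      else step_pmf \<pi>post qpost (branch_state \<rho>0 \<pi>pre qpre \<pi>post qpost k t i))"

definition sa_pmf :: "'s pmf \<Rightarrow> ('s \<Rightarrow> 'a pmf) \<Rightarrow> ('s \<times> 'a) pmf" where
  "sa_pmf \<mu> \<pi> = bind_pmf \<mu> (\<lambda>s. map_pmf (Pair s) (\<pi> s))"

definition branch_d ::
  "'s pmf \<Rightarrow> ('s \<Rightarrow> 'a pmf) \<Rightarrow> ('s \<Rightarrow> 'a \<Rightarrow> 's pmf) \<Rightarrow> ('s \<Rightarrow> 'a pmf) \<Rightarrow> ('s \<Rightarrow> 'a \<Rightarrow> 's pmf)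
   \<Rightarrow> nat \<Rightarrow> nat \<Rightarrow> ('s \<times> 'a) pmf" where
  "branch_d \<rho>0 \<pi>pre qpre \<pi>post qpost k t =
     sa_pmf (branch_state \<rho>0 \<pi>pre qpre \<pi>post qpost k t t) \<pi>post"

definition branched_return ::
  "'s pmf \<Rightarrow> real \<Rightarrow> ('s \<Rightarrow> 'a \<Rightarrow> real) \<Rightarrow> nat \<Rightarrow>
   ('s \<Rightarrow> 'a pmf) \<Rightarrow> ('s \<Rightarrow> 'a \<Rightarrow> 's pmf) \<Rightarrow> ('s \<Rightarrow> 'a pmf) \<Rightarrow> ('s \<Rightarrow> 'a \<Rightarrow> 's pmf) \<Rightarrow> real" where
  "branched_return \<rho>0 \<gamma> r k \<pi>pre qpre \<pi>post qpost =
     (\<Sum>t. \<gamma> ^ t * measure_pmf.expectation (branch_d \<rho>0 \<pi>pre qpre \<pi>post qpost k t)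
                       (\<lambda>(s, a). r s a))"

end

theory Submission
  imports Defs
begin

text \<open>Rather than total variation distances of the state laws one tracks how far expectations of
bounded test functions can differ. Along the branched rollout this error grows additively, by the
policy error for each action and by the expected model error for each transition; so for the \<open>t\<close>-th
reward term it is at most \<open>(t - k)\<close> pre-branch plus \<open>min t k\<close> post-branch step errors plus the error
of the final action. Discounting and summing these bounds gives the claim, in which the term with
\<open>\<gamma>\<^sup>k\<close> is pure slack.\<close>

lemma integrable_measure_pmf_bounded:
  fixes f :: "'a \<Rightarrow> real"
  assumes "\<And>x. \<bar>f x\<bar> \<le> B"
  shows "integrable (measure_pmf p) f"
  by (rule measure_pmf.integrable_const_bound[where B = B]) (auto simp: assms)

lemma abs_expectation_le_expectation:
  fixes f g :: "'a \<Rightarrow> real"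
  assumes fg: "\<And>x. \<bar>f x\<bar> \<le> g x" and g_bound: "\<And>x. \<bar>g x\<bar> \<le> C"
  shows "\<bar>measure_pmf.expectation p f\<bar> \<le> measure_pmf.expectation p g"
proof -
  have f_bound: "\<bar>f x\<bar> \<le> C" for x
    using fg[of x] g_bound[of x] by simp
  have "\<bar>measure_pmf.expectation p f\<bar> \<le> measure_pmf.expectation p (\<lambda>x. \<bar>f x\<bar>)"
    using integral_norm_bound[of "measure_pmf p" f] by (simp add: real_norm_def)
  also have "\<dots> \<le> measure_pmf.expectation p g"
    by (intro integral_mono integrable_measure_pmf_bounded fg) (use f_bound g_bound in auto)
  finally show ?thesis .
qed

lemma abs_expectation_le:
  fixes f :: "'a \<Rightarrow> real"
  assumes "\<And>x. \<bar>f x\<bar> \<le> B"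
  shows "\<bar>measure_pmf.expectation p f\<bar> \<le> B"
proof -
  have "0 \<le> B"
    using assms[of undefined] by simp
  then show ?thesis
    using abs_expectation_le_expectation[of f "\<lambda>_. B" B p] assms by simp
qed

lemma expectation_bind_pmf:
  fixes f :: "'b \<Rightarrow> real"
  assumes "\<And>x. \<bar>f x\<bar> \<le> B"
  shows "measure_pmf.expectation (bind_pmf p N) f
       = measure_pmf.expectation p (\<lambda>x. measure_pmf.expectation (N x) f)"
  using measurable_measure_pmf[of N] unfolding measure_pmf_bind
  by (intro integral_bind[where K = "count_space UNIV" and B = B and B' = 1])
     (auto simp: assms measure_pmf.emeasure_space_1 intro: measure_pmf.finite_measure)

lemma expectation_sa_pmf:
  fixes F :: "'s \<times> 'a \<Rightarrow> real"
  assumes "\<And>x. \<bar>F x\<bar> \<le> B"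
  shows "measure_pmf.expectation (sa_pmf \<mu> \<pi>) F
       = measure_pmf.expectation \<mu> (\<lambda>s. measure_pmf.expectation (\<pi> s) (\<lambda>a. F (s, a)))"
  unfolding sa_pmf_def by (simp add: expectation_bind_pmf[where B = B, OF assms] comp_def)

lemma pmf_summable_on: "pmf p summable_on A"
  using abs_summable_equivalent abs_summable_summable pmf_abs_summable by blast

lemma infsum_pmf_UNIV: "(\<Sum>\<^sub>\<infinity>x. pmf p x) = 1"
  using infsetsum_pmf_eq_1[of p UNIV] infsetsum_infsum[of "pmf p" UNIV] pmf_abs_summable[of p UNIV]
  by simp

lemma abs_summable_on_pmf_times_bounded:
  fixes f :: "'a \<Rightarrow> real"
  assumes "\<And>x. \<bar>f x\<bar> \<le> B"
  shows "Infinite_Set_Sum.abs_summable_on (\<lambda>x. pmf p x * f x) UNIV"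
proof (rule abs_summable_on_comparison_test'[where g = "\<lambda>x. B * pmf p x"])
  show "Infinite_Set_Sum.abs_summable_on (\<lambda>x. B * pmf p x) UNIV"
    by (intro abs_summable_on_cmult_right pmf_abs_summable)
  show "norm (pmf p x * f x) \<le> B * pmf p x" for x
    using mult_right_mono[OF assms[of x] pmf_nonneg[of p x]] by (simp add: abs_mult mult.commute)
qed

lemma expectation_eq_infsum:
  fixes f :: "'a \<Rightarrow> real"
  assumes "\<And>x. \<bar>f x\<bar> \<le> B"
  shows "measure_pmf.expectation p f = (\<Sum>\<^sub>\<infinity>x. pmf p x * f x)"
  unfolding pmf_expectation_eq_infsetsum
  by (rule infsetsum_infsum[OF abs_summable_on_pmf_times_bounded[OF assms]])

lemma summable_on_pmf_times_bounded:
  fixes f :: "'a \<Rightarrow> real"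
  assumes "\<And>x. \<bar>f x\<bar> \<le> B"
  shows "(\<lambda>x. pmf p x * f x) summable_on UNIV"
  by (rule abs_summable_summable[OF abs_summable_equivalent[THEN iffD2,
        OF abs_summable_on_pmf_times_bounded[OF assms]]])

lemma summable_on_abs_pmf_diff: "(\<lambda>x. \<bar>pmf p x - pmf q x\<bar>) summable_on UNIV"
proof -
  have "(\<lambda>x. - pmf q x) summable_on UNIV"
    by (simp add: summable_on_uminus pmf_summable_on)
  from summable_on_add[OF pmf_summable_on this]
  have "(\<lambda>x. pmf p x - pmf q x) summable_on UNIV"
    by simp
  from summable_on_iff_abs_summable_on_real[THEN iffD1, OF this] show ?thesis
    by simp
qed

lemma tv_dist_nonneg: "0 \<le> tv_dist p q"
  unfolding tv_dist_def by (simp add: infsum_nonneg)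

lemma tv_dist_le_1: "tv_dist p q \<le> 1"
proof -
  have "(\<Sum>\<^sub>\<infinity>x. \<bar>pmf p x - pmf q x\<bar>) \<le> (\<Sum>\<^sub>\<infinity>x. pmf p x + pmf q x)"
    by (intro infsum_mono summable_on_abs_pmf_diff summable_on_add pmf_summable_on)
       (simp add: abs_le_iff)
  also have "\<dots> = 2"
    by (simp add: infsum_add pmf_summable_on infsum_pmf_UNIV)
  finally show ?thesis
    unfolding tv_dist_def by simp
qed

lemma abs_tv_dist_le_1: "\<bar>tv_dist p q\<bar> \<le> 1"
  using tv_dist_nonneg[of p q] tv_dist_le_1[of p q] by simp

lemma abs_expectation_diff_le_tv_dist:
  fixes f :: "'a \<Rightarrow> real"
  assumes f: "\<And>x. \<bar>f x\<bar> \<le> B"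
  shows "\<bar>measure_pmf.expectation p f - measure_pmf.expectation q f\<bar> \<le> 2 * B * tv_dist p q"
proof -
  define d where "d x = (pmf p x - pmf q x) * f x" for x
  have d_le: "\<bar>d x\<bar> \<le> B * \<bar>pmf p x - pmf q x\<bar>" for x
    using mult_left_mono[OF f[of x] abs_ge_zero[of "pmf p x - pmf q x"]]
    by (simp add: d_def abs_mult mult.commute)
  have summable_majorant: "(\<lambda>x. B * \<bar>pmf p x - pmf q x\<bar>) summable_on UNIV"
    by (intro summable_on_cmult_right summable_on_abs_pmf_diff)
  have summable_abs_d: "(\<lambda>x. \<bar>d x\<bar>) summable_on UNIV"
    by (rule summable_on_comparison_test[OF summable_majorant]) (use d_le in auto)
  then have summable_d: "d summable_on UNIV"
    using summable_on_iff_abs_summable_on_real[of d UNIV] by (simp add: real_norm_def)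
  have "measure_pmf.expectation p f = (\<Sum>\<^sub>\<infinity>x. d x + pmf q x * f x)"
    by (simp add: expectation_eq_infsum[OF f] d_def algebra_simps)
  also have "\<dots> = (\<Sum>\<^sub>\<infinity>x. d x) + measure_pmf.expectation q f"
    by (simp add: infsum_add[OF summable_d summable_on_pmf_times_bounded[OF f]]
        expectation_eq_infsum[OF f])
  finally have "\<bar>measure_pmf.expectation p f - measure_pmf.expectation q f\<bar> = \<bar>\<Sum>\<^sub>\<infinity>x. d x\<bar>"
    by simp
  also have "\<dots> \<le> (\<Sum>\<^sub>\<infinity>x. \<bar>d x\<bar>)"
    using norm_infsum_bound[of d UNIV] summable_abs_d by (simp add: real_norm_def)
  also have "\<dots> \<le> (\<Sum>\<^sub>\<infinity>x. B * \<bar>pmf p x - pmf q x\<bar>)"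
    by (rule infsum_mono[OF summable_abs_d summable_majorant d_le])
  also have "\<dots> = 2 * B * tv_dist p q"
    unfolding tv_dist_def by (simp add: infsum_cmult_right')
  finally show ?thesis .
qed


text \<open>The dual form of \<open>tv_dist \<mu> \<nu> \<le> e\<close>; unlike the primal form it is directly preserved by
binding with kernels, without exchanging sums.\<close>

definition expectation_close :: "'x pmf \<Rightarrow> 'x pmf \<Rightarrow> real \<Rightarrow> bool" where
  "expectation_close \<mu> \<nu> e \<longleftrightarrow> (\<forall>(g :: 'x \<Rightarrow> real) B. (\<forall>x. \<bar>g x\<bar> \<le> B) \<longrightarrow>
      \<bar>measure_pmf.expectation \<mu> g - measure_pmf.expectation \<nu> g\<bar> \<le> 2 * B * e)"

lemma expectation_closeI:
  assumes "\<And>(g :: 'x \<Rightarrow> real) B. (\<And>x. \<bar>g x\<bar> \<le> B) \<Longrightarrow>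
      \<bar>measure_pmf.expectation \<mu> g - measure_pmf.expectation \<nu> g\<bar> \<le> 2 * B * e"
  shows "expectation_close \<mu> \<nu> e"
  using assms unfolding expectation_close_def by blast

lemma expectation_closeD:
  fixes g :: "'x \<Rightarrow> real"
  assumes "expectation_close \<mu> \<nu> e" and "\<And>x. \<bar>g x\<bar> \<le> B"
  shows "\<bar>measure_pmf.expectation \<mu> g - measure_pmf.expectation \<nu> g\<bar> \<le> 2 * B * e"
  using assms unfolding expectation_close_def by blast

lemma expectation_close_refl: "expectation_close \<mu> \<mu> 0"
  unfolding expectation_close_def by simp

lemma expectation_close_tv_dist: "expectation_close \<mu> \<nu> (tv_dist \<mu> \<nu>)"
  by (intro expectation_closeI abs_expectation_diff_le_tv_dist)

lemma expectation_close_map_pmf: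
  assumes "expectation_close \<mu> \<nu> e"
  shows "expectation_close (map_pmf f \<mu>) (map_pmf f \<nu>) e"
  using assms unfolding expectation_close_def by simp

lemma expectation_close_bind_pmf:
  fixes \<mu>1 \<mu>2 :: "'x pmf" and K1 K2 :: "'x \<Rightarrow> 'y pmf" and \<delta> :: "'x \<Rightarrow> real"
  assumes close: "expectation_close \<mu>1 \<mu>2 e"
    and kernels_close: "\<And>x. expectation_close (K1 x) (K2 x) (\<delta> x)"
    and \<delta>_bound: "\<And>x. \<bar>\<delta> x\<bar> \<le> D"
    and expectation_\<delta>: "measure_pmf.expectation \<mu>1 \<delta> \<le> \<epsilon>"
  shows "expectation_close (bind_pmf \<mu>1 K1) (bind_pmf \<mu>2 K2) (e + \<epsilon>)"
proof (rule expectation_closeI)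
  fix g :: "'y \<Rightarrow> real" and B
  assume g: "\<And>y. \<bar>g y\<bar> \<le> B"
  then have B: "0 \<le> B"
    using abs_ge_zero order_trans by blast
  define G1 where "G1 x = measure_pmf.expectation (K1 x) g" for x
  define G2 where "G2 x = measure_pmf.expectation (K2 x) g" for x
  have G1_bound: "\<bar>G1 x\<bar> \<le> B" and G2_bound: "\<bar>G2 x\<bar> \<le> B" for x
    unfolding G1_def G2_def by (intro abs_expectation_le g)+
  have "\<bar>measure_pmf.expectation \<mu>1 G1 - measure_pmf.expectation \<mu>1 G2\<bar>
      = \<bar>measure_pmf.expectation \<mu>1 (\<lambda>x. G1 x - G2 x)\<bar>"
    using integrable_measure_pmf_bounded[of G1 B] integrable_measure_pmf_bounded[of G2 B]
      G1_bound G2_bound by simp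
  also have "\<dots> \<le> measure_pmf.expectation \<mu>1 (\<lambda>x. 2 * B * \<delta> x)"
  proof (rule abs_expectation_le_expectation[where C = "2 * B * D"])
    show "\<bar>G1 x - G2 x\<bar> \<le> 2 * B * \<delta> x" for x
      unfolding G1_def G2_def by (rule expectation_closeD[OF kernels_close g])
    show "\<bar>2 * B * \<delta> x\<bar> \<le> 2 * B * D" for x
      using \<delta>_bound[of x] B by (simp add: abs_mult mult_left_mono)
  qed
  also have "\<dots> \<le> 2 * B * \<epsilon>"
    using expectation_\<delta> B by (simp add: mult_left_mono)
  finally have kernel_part:
    "\<bar>measure_pmf.expectation \<mu>1 G1 - measure_pmf.expectation \<mu>1 G2\<bar> \<le> 2 * B * \<epsilon>" .
  have initial_part: "\<bar>measure_pmf.expectation \<mu>1 G2 - measure_pmf.expectation \<mu>2 G2\<bar> \<le> 2 * B * e"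
    by (rule expectation_closeD[OF close G2_bound])
  have "measure_pmf.expectation (bind_pmf \<mu>1 K1) g = measure_pmf.expectation \<mu>1 G1"
    and "measure_pmf.expectation (bind_pmf \<mu>2 K2) g = measure_pmf.expectation \<mu>2 G2"
    unfolding G1_def G2_def by (simp_all add: expectation_bind_pmf[OF g])
  with kernel_part initial_part
  show "\<bar>measure_pmf.expectation (bind_pmf \<mu>1 K1) g - measure_pmf.expectation (bind_pmf \<mu>2 K2) g\<bar>
      \<le> 2 * B * (e + \<epsilon>)"
    by (simp add: algebra_simps)
qed

lemma expectation_close_sa_pmf:
  assumes close: "expectation_close \<mu>1 \<mu>2 e"
    and policies_close: "\<And>s. tv_dist (\<pi>1 s) (\<pi>2 s) \<le> \<epsilon>"
  shows "expectation_close (sa_pmf \<mu>1 \<pi>1) (sa_pmf \<mu>2 \<pi>2) (e + \<epsilon>)"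
  unfolding sa_pmf_def
proof (rule expectation_close_bind_pmf[OF close _ abs_tv_dist_le_1])
  show "expectation_close (map_pmf (Pair s) (\<pi>1 s)) (map_pmf (Pair s) (\<pi>2 s)) (tv_dist (\<pi>1 s) (\<pi>2 s))"
    for s
    by (intro expectation_close_map_pmf expectation_close_tv_dist)
  have "measure_pmf.expectation \<mu>1 (\<lambda>s. tv_dist (\<pi>1 s) (\<pi>2 s)) \<le> measure_pmf.expectation \<mu>1 (\<lambda>_. \<epsilon>)"
    by (intro integral_mono integrable_measure_pmf_bounded[OF abs_tv_dist_le_1] policies_close
        integrable_measure_pmf_bounded[of "\<lambda>_. \<epsilon>" "\<bar>\<epsilon>\<bar>"]) simp
  then show "measure_pmf.expectation \<mu>1 (\<lambda>s. tv_dist (\<pi>1 s) (\<pi>2 s)) \<le> \<epsilon>"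
    by simp
qed

lemma expectation_close_step_pmf:
  fixes \<pi>1 \<pi>2 :: "'s \<Rightarrow> 'a pmf" and q1 q2 :: "'s \<Rightarrow> 'a \<Rightarrow> 's pmf"
  assumes close: "expectation_close \<mu>1 \<mu>2 e"
    and policies_close: "\<And>s. tv_dist (\<pi>1 s) (\<pi>2 s) \<le> \<epsilon>\<pi>"
    and model_error: "measure_pmf.expectation (sa_pmf \<mu>1 \<pi>1) (\<lambda>(s, a). tv_dist (q1 s a) (q2 s a)) \<le> \<epsilon>m"
  shows "expectation_close (step_pmf \<pi>1 q1 \<mu>1) (step_pmf \<pi>2 q2 \<mu>2) (e + \<epsilon>m + \<epsilon>\<pi>)"
proof -
  define T where "T s = measure_pmf.expectation (\<pi>1 s) (\<lambda>a. tv_dist (q1 s a) (q2 s a))" for s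
  have T_bound: "\<bar>T s\<bar> \<le> 1" for s
    unfolding T_def by (intro abs_expectation_le abs_tv_dist_le_1)
  have one_step_close:
    "expectation_close (bind_pmf (\<pi>1 s) (q1 s)) (bind_pmf (\<pi>2 s) (q2 s)) (tv_dist (\<pi>1 s) (\<pi>2 s) + T s)"
    for s
    unfolding T_def
    by (rule expectation_close_bind_pmf[OF expectation_close_tv_dist expectation_close_tv_dist
          abs_tv_dist_le_1 order_refl])
  have error_bound: "\<bar>tv_dist (\<pi>1 s) (\<pi>2 s) + T s\<bar> \<le> 2" for s
    using abs_tv_dist_le_1[of "\<pi>1 s" "\<pi>2 s"] T_bound[of s] by linarith
  have "measure_pmf.expectation \<mu>1 T \<le> \<epsilon>m"
    using model_error unfolding T_def
    by (subst (asm) expectation_sa_pmf[where B = 1]) (auto simp: abs_tv_dist_le_1)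
  moreover have "measure_pmf.expectation \<mu>1 (\<lambda>s. tv_dist (\<pi>1 s) (\<pi>2 s)) \<le> \<epsilon>\<pi>"
    using integral_mono[OF integrable_measure_pmf_bounded[OF abs_tv_dist_le_1]
        integrable_measure_pmf_bounded[of "\<lambda>_. \<epsilon>\<pi>" "\<bar>\<epsilon>\<pi>\<bar>"] policies_close]
    by simp
  ultimately have expected_error:
    "measure_pmf.expectation \<mu>1 (\<lambda>s. tv_dist (\<pi>1 s) (\<pi>2 s) + T s) \<le> \<epsilon>m + \<epsilon>\<pi>"
    by (subst Bochner_Integration.integral_add)
       (auto intro: integrable_measure_pmf_bounded abs_tv_dist_le_1 T_bound)
  have "expectation_close (step_pmf \<pi>1 q1 \<mu>1) (step_pmf \<pi>2 q2 \<mu>2) (e + (\<epsilon>m + \<epsilon>\<pi>))"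
    unfolding step_pmf_def
    by (rule expectation_close_bind_pmf[OF close one_step_close error_bound expected_error])
  then show ?thesis
    by (simp add: add.assoc)
qed

lemma abs_discounted_sum_diff_le:
  fixes \<gamma> :: real and f g c :: "nat \<Rightarrow> real"
  assumes \<gamma>: "0 \<le> \<gamma>" "\<gamma> < 1"
    and f_bound: "\<And>t. \<bar>f t\<bar> \<le> M" and g_bound: "\<And>t. \<bar>g t\<bar> \<le> M"
    and diff_le: "\<And>t. \<bar>f t - g t\<bar> \<le> c t"
    and summable_c: "summable (\<lambda>t. \<gamma> ^ t * c t)"
  shows "\<bar>(\<Sum>t. \<gamma> ^ t * f t) - (\<Sum>t. \<gamma> ^ t * g t)\<bar> \<le> (\<Sum>t. \<gamma> ^ t * c t)"
proof -
  have summable_majorant: "summable (\<lambda>t. M * \<gamma> ^ t)"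
    using \<gamma> by (intro summable_mult summable_geometric) simp
  have "summable (\<lambda>t. \<gamma> ^ t * f t)" and "summable (\<lambda>t. \<gamma> ^ t * g t)"
    using f_bound g_bound \<gamma>
    by (auto intro!: summable_comparison_test'[OF summable_majorant]
        simp: abs_mult mult.commute mult_right_mono)
  then have "(\<Sum>t. \<gamma> ^ t * f t) - (\<Sum>t. \<gamma> ^ t * g t) = (\<Sum>t. \<gamma> ^ t * (f t - g t))"
    by (simp add: suminf_diff right_diff_distrib)
  moreover have diff_le_c: "\<bar>\<gamma> ^ t * (f t - g t)\<bar> \<le> \<gamma> ^ t * c t" for t
    using diff_le[of t] \<gamma> by (simp add: abs_mult mult_left_mono)
  then have "\<bar>\<Sum>t. \<gamma> ^ t * (f t - g t)\<bar> \<le> (\<Sum>t. \<bar>\<gamma> ^ t * (f t - g t)\<bar>)"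
    by (intro summable_rabs summable_rabs_comparison_test[OF _ summable_c]) auto
  moreover have "(\<Sum>t. \<bar>\<gamma> ^ t * (f t - g t)\<bar>) \<le> (\<Sum>t. \<gamma> ^ t * c t)"
    using diff_le_c
    by (intro suminf_le summable_rabs_comparison_test[OF _ summable_c] summable_c) auto
  ultimately show ?thesis
    by linarith
qed

lemma sums_power_times_diff:
  fixes \<gamma> :: real
  assumes "0 < \<gamma>" "\<gamma> < 1"
  shows "(\<lambda>t. \<gamma> ^ t * real (t - k)) sums (\<gamma> ^ (k + 1) / (1 - \<gamma>)\<^sup>2)"
proof -
  have "(\<lambda>n. real (Suc n) * \<gamma> ^ n) sums (1 / (1 - \<gamma>)\<^sup>2)"
    by (rule geometric_deriv_sums) (use assms in simp)
  from sums_mult[OF this, of "\<gamma> ^ (k + 1)"]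
  have "(\<lambda>n. \<gamma> ^ (n + (k + 1)) * real (n + (k + 1) - k)) sums (\<gamma> ^ (k + 1) / (1 - \<gamma>)\<^sup>2)"
    by (simp add: power_add algebra_simps)
  then show ?thesis
    by (subst (asm) sums_zero_iff_shift) auto
qed

lemma sums_discounted_delay:
  fixes \<gamma> :: real
  assumes "0 < \<gamma>" "\<gamma> < 1"
  shows "(\<lambda>t. \<gamma> ^ t * (c * (real (t - k) * A + K)))
    sums (c * (A * (\<gamma> ^ (k + 1) / (1 - \<gamma>)\<^sup>2) + K / (1 - \<gamma>)))"
proof -
  have "(\<lambda>t. c * (A * (\<gamma> ^ t * real (t - k)) + K * \<gamma> ^ t))
      sums (c * (A * (\<gamma> ^ (k + 1) / (1 - \<gamma>)\<^sup>2) + K * (1 / (1 - \<gamma>))))"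
    using assms by (intro sums_mult sums_add sums_power_times_diff geometric_sums) simp_all
  then show ?thesis
    by (simp add: algebra_simps)
qed

context
  fixes \<rho>0 :: "'s pmf" and k t :: nat
    and \<pi>pre1 \<pi>post1 \<pi>pre2 \<pi>post2 :: "'s \<Rightarrow> 'a pmf"
    and qpre1 qpost1 qpre2 qpost2 :: "'s \<Rightarrow> 'a \<Rightarrow> 's pmf"
    and \<epsilon>m_pre \<epsilon>m_post \<epsilon>\<pi>_pre \<epsilon>\<pi>_post :: real
  assumes model_pre: "\<And>i. i < branch_m k t \<Longrightarrow>
       measure_pmf.expectation
         (sa_pmf (branch_state \<rho>0 \<pi>pre1 qpre1 \<pi>post1 qpost1 k t i) \<pi>pre1)
         (\<lambda>(s, a). tv_dist (qpre1 s a) (qpre2 s a)) \<le> \<epsilon>m_pre"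
    and model_post: "\<And>i. branch_m k t \<le> i \<Longrightarrow> i < t \<Longrightarrow>
       measure_pmf.expectation
         (sa_pmf (branch_state \<rho>0 \<pi>pre1 qpre1 \<pi>post1 qpost1 k t i) \<pi>post1)
         (\<lambda>(s, a). tv_dist (qpost1 s a) (qpost2 s a)) \<le> \<epsilon>m_post"
    and pol_pre: "\<And>s. tv_dist (\<pi>pre1 s) (\<pi>pre2 s) \<le> \<epsilon>\<pi>_pre"
    and pol_post: "\<And>s. tv_dist (\<pi>post1 s) (\<pi>post2 s) \<le> \<epsilon>\<pi>_post"
begin

lemma expectation_close_branch_state:
  assumes "i \<le> t"
  shows "expectation_close
    (branch_state \<rho>0 \<pi>pre1 qpre1 \<pi>post1 qpost1 k t i) (branch_state \<rho>0 \<pi>pre2 qpre2 \<pi>post2 qpost2 k t i)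
    (real (min i (branch_m k t)) * (\<epsilon>m_pre + \<epsilon>\<pi>_pre) + real (i - branch_m k t) * (\<epsilon>m_post + \<epsilon>\<pi>_post))"
  using assms
proof (induction i)
  case 0
  then show ?case
    by (simp add: expectation_close_refl)
next
  case (Suc i)
  let ?m = "branch_m k t"
  from Suc have IH: "expectation_close
    (branch_state \<rho>0 \<pi>pre1 qpre1 \<pi>post1 qpost1 k t i) (branch_state \<rho>0 \<pi>pre2 qpre2 \<pi>post2 qpost2 k t i)
    (real (min i ?m) * (\<epsilon>m_pre + \<epsilon>\<pi>_pre) + real (i - ?m) * (\<epsilon>m_post + \<epsilon>\<pi>_post))"
    by simp
  show ?case
  proof (cases "i < ?m")
    case True
    with expectation_close_step_pmf[OF IH pol_pre model_pre[OF True]] show ?thesis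
      by (simp add: algebra_simps)
  next
    case False
    with Suc.prems expectation_close_step_pmf[OF IH pol_post model_post] show ?thesis
      by (simp add: Suc_diff_le algebra_simps)
  qed
qed

lemma abs_expectation_branch_d_diff_le:
  fixes f :: "'s \<times> 'a \<Rightarrow> real"
  assumes "\<And>x. \<bar>f x\<bar> \<le> B"
  shows "\<bar>measure_pmf.expectation (branch_d \<rho>0 \<pi>pre1 qpre1 \<pi>post1 qpost1 k t) f
        - measure_pmf.expectation (branch_d \<rho>0 \<pi>pre2 qpre2 \<pi>post2 qpost2 k t) f\<bar>
    \<le> 2 * B * (real (t - k) * (\<epsilon>m_pre + \<epsilon>\<pi>_pre) + real (min t k) * (\<epsilon>m_post + \<epsilon>\<pi>_post)
               + \<epsilon>\<pi>_post)"
proof -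
  have "branch_m k t = t - k" and "min t (t - k) = t - k" and "t - (t - k) = min t k"
    by (auto simp: branch_m_def)
  then show ?thesis
    using expectation_closeD[OF expectation_close_sa_pmf[OF
          expectation_close_branch_state[OF order_refl] pol_post] assms]
    unfolding branch_d_def by simp
qed

end

theorem lemmaB4:
  fixes \<rho>0 :: "'s::countable pmf"
    and r :: "'s \<Rightarrow> 'a::countable \<Rightarrow> real"
    and \<gamma> rmax :: real and k :: nat
    and \<pi>pre1 \<pi>post1 \<pi>pre2 \<pi>post2 :: "'s \<Rightarrow> 'a pmf"
    and qpre1 qpost1 qpre2 qpost2 :: "'s \<Rightarrow> 'a \<Rightarrow> 's pmf"
    and \<epsilon>m_pre \<epsilon>m_post \<epsilon>\<pi>_pre \<epsilon>\<pi>_post :: real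
  assumes \<gamma>: "0 < \<gamma>" "\<gamma> < 1"
    and r_bound: "\<And>s a. \<bar>r s a\<bar> \<le> rmax"
    and model_pre: "\<And>t i. i < branch_m k t \<Longrightarrow>
       measure_pmf.expectation
         (sa_pmf (branch_state \<rho>0 \<pi>pre1 qpre1 \<pi>post1 qpost1 k t i) \<pi>pre1)
         (\<lambda>(s, a). tv_dist (qpre1 s a) (qpre2 s a)) \<le> \<epsilon>m_pre"
    and model_post: "\<And>t i. branch_m k t \<le> i \<Longrightarrow> i < t \<Longrightarrow>
       measure_pmf.expectation
         (sa_pmf (branch_state \<rho>0 \<pi>pre1 qpre1 \<pi>post1 qpost1 k t i) \<pi>post1)
         (\<lambda>(s, a). tv_dist (qpost1 s a) (qpost2 s a)) \<le> \<epsilon>m_post"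
    and pol_pre: "\<And>s. tv_dist (\<pi>pre1 s) (\<pi>pre2 s) \<le> \<epsilon>\<pi>_pre"
    and pol_post: "\<And>s. tv_dist (\<pi>post1 s) (\<pi>post2 s) \<le> \<epsilon>\<pi>_post"
  shows "\<bar>branched_return \<rho>0 \<gamma> r k \<pi>pre1 qpre1 \<pi>post1 qpost1
          - branched_return \<rho>0 \<gamma> r k \<pi>pre2 qpre2 \<pi>post2 qpost2\<bar>
    \<le> 2 * rmax * (\<gamma> ^ (k + 1) / (1 - \<gamma>)\<^sup>2 * (\<epsilon>m_pre + \<epsilon>\<pi>_pre)
                  + real k / (1 - \<gamma>) * (\<epsilon>m_post + \<epsilon>\<pi>_post)
                  + \<gamma> ^ k / (1 - \<gamma>) * \<epsilon>\<pi>_pre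
                  + 1 / (1 - \<gamma>) * \<epsilon>\<pi>_post)"
proof -
  define A where "A = \<epsilon>m_pre + \<epsilon>\<pi>_pre"
  define K where "K = real k * (\<epsilon>m_post + \<epsilon>\<pi>_post) + \<epsilon>\<pi>_post"
  define R :: "'s \<times> 'a \<Rightarrow> real" where "R = (\<lambda>(s, a). r s a)"
  have R_bound: "\<bar>R x\<bar> \<le> rmax" for x
    by (cases x) (simp add: R_def r_bound)
  have "0 \<le> rmax" and "0 \<le> \<epsilon>\<pi>_pre" and "0 \<le> \<epsilon>\<pi>_post"
    using r_bound[of undefined undefined] pol_pre[of undefined] pol_post[of undefined]
      tv_dist_nonneg[of "\<pi>pre1 undefined" "\<pi>pre2 undefined"]
      tv_dist_nonneg[of "\<pi>post1 undefined" "\<pi>post2 undefined"] by linarith+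
  text \<open>The hypotheses force \<open>\<epsilon>m_post \<ge> 0\<close> only through \<open>model_post\<close> at \<open>t = 1\<close>,
    and only when \<open>k > 0\<close>; this is what allows replacing \<open>min t k\<close> by \<open>k\<close> below.\<close>
  have min_k_le: "real (min t k) * (\<epsilon>m_post + \<epsilon>\<pi>_post) \<le> real k * (\<epsilon>m_post + \<epsilon>\<pi>_post)" for t
  proof (cases "k = 0")
    case False
    have "0 \<le> measure_pmf.expectation (sa_pmf (branch_state \<rho>0 \<pi>pre1 qpre1 \<pi>post1 qpost1 k 1 0) \<pi>post1)
        (\<lambda>(s, a). tv_dist (qpost1 s a) (qpost2 s a))"
      by (rule integral_nonneg_AE) (simp add: tv_dist_nonneg split: prod.split)
    also have "\<dots> \<le> \<epsilon>m_post"
      using False by (intro model_post) (simp_all add: branch_m_def)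
    finally show ?thesis
      using \<open>0 \<le> \<epsilon>\<pi>_post\<close> by (intro mult_right_mono) simp_all
  qed simp
  have term_diff: "\<bar>measure_pmf.expectation (branch_d \<rho>0 \<pi>pre1 qpre1 \<pi>post1 qpost1 k t) R
      - measure_pmf.expectation (branch_d \<rho>0 \<pi>pre2 qpre2 \<pi>post2 qpost2 k t) R\<bar>
    \<le> 2 * rmax * (real (t - k) * A + K)" for t
  proof -
    have "\<bar>measure_pmf.expectation (branch_d \<rho>0 \<pi>pre1 qpre1 \<pi>post1 qpost1 k t) R
        - measure_pmf.expectation (branch_d \<rho>0 \<pi>pre2 qpre2 \<pi>post2 qpost2 k t) R\<bar>
      \<le> 2 * rmax * (real (t - k) * A + real (min t k) * (\<epsilon>m_post + \<epsilon>\<pi>_post) + \<epsilon>\<pi>_post)"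
      unfolding A_def by (rule abs_expectation_branch_d_diff_le[OF model_pre model_post pol_pre pol_post R_bound])
    also have "\<dots> \<le> 2 * rmax * (real (t - k) * A + K)"
      unfolding K_def using \<open>0 \<le> rmax\<close> min_k_le[of t] by (intro mult_left_mono) simp_all
    finally show ?thesis .
  qed
  note sums_bound = sums_discounted_delay[OF \<gamma>, of "2 * rmax" k A K]
  have "\<bar>branched_return \<rho>0 \<gamma> r k \<pi>pre1 qpre1 \<pi>post1 qpost1
          - branched_return \<rho>0 \<gamma> r k \<pi>pre2 qpre2 \<pi>post2 qpost2\<bar>
      \<le> (\<Sum>t. \<gamma> ^ t * (2 * rmax * (real (t - k) * A + K)))"
    unfolding branched_return_def R_def[symmetric]
    by (rule abs_discounted_sum_diff_le[where M = rmax])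
       (use \<gamma> R_bound term_diff sums_summable[OF sums_bound] in \<open>auto intro: abs_expectation_le\<close>)
  also have "\<dots> = 2 * rmax * (A * (\<gamma> ^ (k + 1) / (1 - \<gamma>)\<^sup>2) + K / (1 - \<gamma>))"
    using sums_bound by (rule sums_unique[symmetric])
  also have "\<dots> \<le> 2 * rmax * (\<gamma> ^ (k + 1) / (1 - \<gamma>)\<^sup>2 * (\<epsilon>m_pre + \<epsilon>\<pi>_pre)
                  + real k / (1 - \<gamma>) * (\<epsilon>m_post + \<epsilon>\<pi>_post)
                  + \<gamma> ^ k / (1 - \<gamma>) * \<epsilon>\<pi>_pre
                  + 1 / (1 - \<gamma>) * \<epsilon>\<pi>_post)"
    using \<open>0 \<le> rmax\<close> \<open>0 \<le> \<epsilon>\<pi>_pre\<close> \<gamma> unfolding A_def K_def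
    by (intro mult_left_mono) (simp_all add: algebra_simps add_divide_distrib)
  finally show ?thesis .
qed

end
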